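(* Let $m\ge 4$, $t$, $g$ be positive integers with $t\ge g+1$, and put $\alpha=(t-1)-g$. Consider a bin configuration of the game $G(m,t,g)$ in which every current bin load is at most $t-1$. Suppose there is a bin $B$ such that the sum of the loads of the other $m-1$ bins is at least $(m-1)g-\alpha$. Then Algorithm wins from this configuration.
   Context: Bin stretching game $G(m,t,g)$: there are $m$ bins. In each round Adversary presents an item of positive integer size, and Algorithm then irrevocably places it into one of the $m$ bins. The load of a bin is the total size of the items in it. A bin configuration consists of: - the current loads $L_1,\dots,L_m$ of the bins, and - the multiset $\mathcal I$ of items presented so far, placed so that the bins have exactly these loads. "Algorithm wins from this configuration" means the following. There is an online rule which, given the configuration and the items presented so far, assigns each newly presented item to a bin. This rule must guarantee: for every finite sequence $e_1,\dots,e_j$ of further positive-integer items such that the multiset $\mathcal I\cup\{e_1,\dots,e_j\}$ can be partitioned into $m$ parts each of total size at most $g$, every bin load is at most $t-1$ after these items are placed. *)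

theory Defs
  imports Main "HOL-Library.Multiset"
begin

text \<open>Bins are indexed by 0..<m. A bin configuration is given by the contents
  C i (a multiset of item sizes) of every bin i < m; its load is the sum of C i,
  and the multiset of items presented so far is the sum over all bins.\<close>

definition bin_load :: "(nat \<Rightarrow> nat multiset) \<Rightarrow> nat \<Rightarrow> nat" where
  "bin_load C i = sum_mset (C i)"

definition items_of :: "nat \<Rightarrow> (nat \<Rightarrow> nat multiset) \<Rightarrow> nat multiset" where
  "items_of m C = (\<Sum>i<m. C i)"

definition packable :: "nat \<Rightarrow> nat \<Rightarrow> nat multiset \<Rightarrow> bool" where
  "packable m g M \<longleftrightarrow> (\<exists>P :: nat \<Rightarrow> nat multiset.
      (\<Sum>i<m. P i) = M \<and> (\<forall>i<m. sum_mset (P i) \<le> g))"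

text \<open>An online rule: given the list of items presented after the configuration
  (the current item last), it returns the bin receiving the current item.\<close>
definition load_after ::
  "(nat \<Rightarrow> nat multiset) \<Rightarrow> (nat list \<Rightarrow> nat) \<Rightarrow> nat list \<Rightarrow> nat \<Rightarrow> nat" where
  "load_after C A es i =
     bin_load C i + (\<Sum>k<length es. if A (take (Suc k) es) = i then es ! k else 0)"

definition alg_wins :: "nat \<Rightarrow> nat \<Rightarrow> nat \<Rightarrow> (nat \<Rightarrow> nat multiset) \<Rightarrow> bool" where
  "alg_wins m t g C \<longleftrightarrow> (\<exists>A :: nat list \<Rightarrow> nat.
      (\<forall>xs. A xs < m) \<and>
      (\<forall>es. (\<forall>e\<in>set es. 0 < e) \<longrightarrow> packable m g (items_of m C + mset es) \<longrightarrow>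
            (\<forall>i<m. load_after C A es i \<le> t - 1)))"

end

theory Submission
  imports Defs
begin

text \<open>Algorithm puts every further item into the bin \<open>B\<close>. Since the final item
  multiset is packable, its total volume is at most \<open>m g\<close>; the other \<open>m - 1\<close> bins
  already hold at least \<open>(m - 1) g - \<alpha>\<close> of it, so \<open>B\<close> never exceeds
  \<open>g + \<alpha> = t - 1\<close>.\<close>

lemma sum_mset_sum:
  "sum_mset (\<Sum>i\<in>A. M i) = (\<Sum>i\<in>A. sum_mset (M i :: 'a::comm_monoid_add multiset))"
  by (induction A rule: infinite_finite_induct) auto

lemma sum_mset_items_of: "sum_mset (items_of m C) = (\<Sum>i<m. bin_load C i)"
  by (simp add: items_of_def bin_load_def sum_mset_sum)

lemma packable_sum_mset_le:
  assumes "packable m g M"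
  shows "sum_mset M \<le> m * g"
proof -
  obtain P where P: "(\<Sum>i<m. P i) = M" "\<forall>i<m. sum_mset (P i) \<le> g"
    using assms unfolding packable_def by blast
  have "sum_mset M = (\<Sum>i<m. sum_mset (P i))"
    using P(1) by (simp add: sum_mset_sum [symmetric])
  also have "\<dots> \<le> (\<Sum>i<m. g)"
    using P(2) by (intro sum_mono) auto
  finally show ?thesis by simp
qed

lemma load_after_const:
  "load_after C (\<lambda>_. B) es i = bin_load C i + (if i = B then sum_list es else 0)"
  unfolding load_after_def by (simp add: sum_list_sum_nth atLeast0LessThan)

lemma alg_wins_fill_one_bin:
  assumes "B < m"
    and loads: "\<forall>i<m. bin_load C i \<le> t - 1"
    and others: "m * g \<le> (t - 1) + (\<Sum>i\<in>{..<m} - {B}. bin_load C i)"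
  shows "alg_wins m t g C"
  unfolding alg_wins_def
proof (intro exI[of _ "\<lambda>_. B"] conjI allI impI)
  show "\<And>xs. B < m" using \<open>B < m\<close> .
  fix es :: "nat list" and i
  assume "packable m g (items_of m C + mset es)" and "i < m"
  then have "(\<Sum>i<m. bin_load C i) + sum_list es \<le> m * g"
    using packable_sum_mset_le by (fastforce simp: sum_mset_items_of sum_mset_sum_list)
  moreover have "(\<Sum>i<m. bin_load C i) = bin_load C B + (\<Sum>i\<in>{..<m} - {B}. bin_load C i)"
    using \<open>B < m\<close> by (simp add: sum.remove)
  ultimately have "bin_load C B + sum_list es \<le> t - 1"
    using others by linarith
  then show "load_after C (\<lambda>_. B) es i \<le> t - 1"
    using loads \<open>i < m\<close> by (simp add: load_after_const)
qed

theorem mainTheorem1: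
  fixes m t g :: nat and C :: "nat \<Rightarrow> nat multiset"
  assumes "m \<ge> 4" and "0 < t" and "0 < g" and "t \<ge> g + 1"
    and "\<forall>i<m. \<forall>x\<in>#C i. 0 < x"
    and "\<forall>i<m. bin_load C i \<le> t - 1"
    and "\<exists>B<m. int (\<Sum>i\<in>{..<m} - {B}. bin_load C i)
                 \<ge> int (m - 1) * int g - (int t - 1 - int g)"
  shows "alg_wins m t g C"
proof -
  obtain B where "B < m"
    and hB: "int (\<Sum>i\<in>{..<m} - {B}. bin_load C i) \<ge> int (m - 1) * int g - (int t - 1 - int g)"
    using assms(7) by blast
  have "int (m - 1) * int g = int m * int g - int g"
    using \<open>B < m\<close> by (simp add: of_nat_diff algebra_simps)
  then have "int (m * g) \<le> int ((t - 1) + (\<Sum>i\<in>{..<m} - {B}. bin_load C i))"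
    using hB \<open>0 < t\<close> by (simp add: of_nat_diff)
  then have "m * g \<le> (t - 1) + (\<Sum>i\<in>{..<m} - {B}. bin_load C i)"
    by linarith
  then show ?thesis
    using alg_wins_fill_one_bin \<open>B < m\<close> assms(6) by blast
qed

end
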